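(* In a combinatorial auction where all bidders other than $i$ play piecewise constant strategies, every cell $S$ of bidder $i$'s action space has a unique Pareto point, and this Pareto point is a vertex of $S$.
   Context: A combinatorial auction sells goods $M$ to bidders $N$; each bidder $i$ bids a vector $b_i\in\mathbb{R}_{\ge0}^r$ on his $r$ bundles of interest (other bundles bid $0$). An allocation gives each bidder one bundle of interest or $\emptyset$, pairwise disjoint; $X(b)$ is the set of allocations maximizing reported welfare $\sum_i b_i(x_i)$. Bidders' valuations are independent random variables $V_j$ and strategies $s_j$ map valuations to bids; piecewise constant means finitely many values, so $b_{-i}=s_{-i}(V_{-i})$ has finite support. A cell of bidder $i$'s action space $\mathbb{R}_{\ge0}^r$ is a maximal (with respect to inclusion) connected region $S$ such that for every $b_{-i}$ with positive probability there exists an allocation $x$ with $x\in X(b_i,b_{-i})$ for all $b_i\in S$; cells are convex polytopes. A Pareto point of a cell $S$ is a point $b_i\in S$ such that there is no $b_i'\in S$ with $b_i'\le b_i$ coordinatewise and $b_i'\neq b_i$. *)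

theory Defs
  imports "HOL-Probability.Probability"
begin

text \<open>Bidder i's bid is
  a vector in real^'r, where 'r indexes i's r bundles of interest via beta.\<close>

definition valid_bid :: "'g set set \<Rightarrow> ('g set \<Rightarrow> real) \<Rightarrow> bool" where
  "valid_bid I b \<longleftrightarrow> (\<forall>T. 0 \<le> b T) \<and> (\<forall>T. T \<notin> I \<longrightarrow> b T = 0)"

definition bid_of_vec :: "('r \<Rightarrow> 'g set) \<Rightarrow> real ^ 'r \<Rightarrow> 'g set \<Rightarrow> real" where
  "bid_of_vec beta v T = (if T \<in> range beta then v $ (inv beta T) else 0)"

definition allocation :: "'n set \<Rightarrow> ('n \<Rightarrow> 'g set set) \<Rightarrow> ('n \<Rightarrow> 'g set) \<Rightarrow> bool" where
  "allocation N I x \<longleftrightarrow>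
     (\<forall>j\<in>N. x j = {} \<or> x j \<in> I j) \<and>
     (\<forall>j\<in>N. \<forall>j'\<in>N. j \<noteq> j' \<longrightarrow> x j \<inter> x j' = {}) \<and>
     (\<forall>j. j \<notin> N \<longrightarrow> x j = {})"

definition welfare :: "'n set \<Rightarrow> ('n \<Rightarrow> 'g set \<Rightarrow> real) \<Rightarrow> ('n \<Rightarrow> 'g set) \<Rightarrow> real" where
  "welfare N b x = (\<Sum>j\<in>N. b j (x j))"

definition opt_allocs :: "'n set \<Rightarrow> ('n \<Rightarrow> 'g set set) \<Rightarrow> ('n \<Rightarrow> 'g set \<Rightarrow> real)
    \<Rightarrow> ('n \<Rightarrow> 'g set) set" where
  "opt_allocs N I b = {x. allocation N I x \<and>
      (\<forall>y. allocation N I y \<longrightarrow> welfare N b y \<le> welfare N b x)}"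

definition combine :: "'n \<Rightarrow> ('r \<Rightarrow> 'g set) \<Rightarrow> real ^ 'r \<Rightarrow> ('n \<Rightarrow> 'g set \<Rightarrow> real)
    \<Rightarrow> 'n \<Rightarrow> 'g set \<Rightarrow> real" where
  "combine i beta v bo = (\<lambda>j. if j = i then bid_of_vec beta v else bo j)"

definition action_space :: "(real ^ 'r) set" where
  "action_space = {v. \<forall>k. 0 \<le> v $ k}"

definition admissible_region :: "'n set \<Rightarrow> ('n \<Rightarrow> 'g set set) \<Rightarrow> 'n \<Rightarrow> ('r \<Rightarrow> 'g set)
    \<Rightarrow> ('n \<Rightarrow> 'g set \<Rightarrow> real) set \<Rightarrow> (real ^ 'r) set \<Rightarrow> bool" where
  "admissible_region N I i beta Bpos S \<longleftrightarrow>
     S \<subseteq> action_space \<and> connected S \<and>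
     (\<forall>bo\<in>Bpos. \<exists>x. \<forall>v\<in>S. x \<in> opt_allocs N I (combine i beta v bo))"

definition is_cell :: "'n set \<Rightarrow> ('n \<Rightarrow> 'g set set) \<Rightarrow> 'n \<Rightarrow> ('r \<Rightarrow> 'g set)
    \<Rightarrow> ('n \<Rightarrow> 'g set \<Rightarrow> real) set \<Rightarrow> (real ^ 'r) set \<Rightarrow> bool" where
  "is_cell N I i beta Bpos S \<longleftrightarrow>
     admissible_region N I i beta Bpos S \<and>
     (\<forall>T. admissible_region N I i beta Bpos T \<and> S \<subseteq> T \<longrightarrow> T = S)"

definition pareto_point :: "(real ^ 'r) set \<Rightarrow> real ^ 'r \<Rightarrow> bool" where
  "pareto_point S p \<longleftrightarrow> p \<in> S \<and> \<not> (\<exists>q\<in>S. (\<forall>k. q $ k \<le> p $ k) \<and> q \<noteq> p)"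

definition others_bids :: "'n set \<Rightarrow> 'n \<Rightarrow> ('n \<Rightarrow> 'v \<Rightarrow> 'g set \<Rightarrow> real)
    \<Rightarrow> ('n \<Rightarrow> 'w \<Rightarrow> 'v) \<Rightarrow> 'w \<Rightarrow> 'n \<Rightarrow> 'g set \<Rightarrow> real" where
  "others_bids N i s V w = (\<lambda>j. if j \<in> N - {i} then s j (V j w) else (\<lambda>_. 0))"

definition positive_profiles :: "'w measure \<Rightarrow> 'n set \<Rightarrow> 'n \<Rightarrow> ('n \<Rightarrow> 'v \<Rightarrow> 'g set \<Rightarrow> real)
    \<Rightarrow> ('n \<Rightarrow> 'w \<Rightarrow> 'v) \<Rightarrow> ('n \<Rightarrow> 'g set \<Rightarrow> real) set" where
  "positive_profiles Pr N i s V =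
     {bo. measure Pr {w \<in> space Pr. others_bids N i s V w = bo} > 0}"

end

(* For a fixed profile b_{-i}, the bids b_i at which a fixed allocation stays welfare
   maximizing form an intersection of closed half-spaces, since welfare is affine in b_i.
   This region is also closed under componentwise minimum: lowering b_i to min u w lowers
   the value of every bundle, while the allocated bundle keeps one of its two values.
   By maximality a cell is the intersection of such regions with the orthant, so it is a
   nonempty closed set, bounded below and closed under componentwise minimum; hence it
   has a least element, which is its only Pareto point and lies inside no segment of it.
   The argument works for any set of profiles b_{-i}. *)
theory Submission
  imports Defs
begin

definition vec_min :: "'a::linorder ^ 'n \<Rightarrow> 'a ^ 'n \<Rightarrow> 'a ^ 'n" where
  "vec_min u w = (\<chi> k. min (u $ k) (w $ k))"

lemma vec_min_le_left: "vec_min u w \<le> u"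
  by (simp add: vec_min_def less_eq_vec_def)

lemma vec_min_greatest: "v \<le> u \<Longrightarrow> v \<le> w \<Longrightarrow> v \<le> vec_min u w"
  by (simp add: vec_min_def less_eq_vec_def)

lemma vec_min_eq_left_iff: "vec_min u w = u \<longleftrightarrow> u \<le> w"
  by (auto simp: vec_min_def less_eq_vec_def vec_eq_iff min_def)

lemma sum_components_less:
  fixes u v :: "'a::ordered_cancel_comm_monoid_add ^ 'n::finite"
  assumes "u \<le> v" "u \<noteq> v"
  shows "(\<Sum>k\<in>UNIV. u $ k) < (\<Sum>k\<in>UNIV. v $ k)"
proof (rule sum_strict_mono_ex1)
  show "\<forall>k\<in>UNIV. u $ k \<le> v $ k" using assms(1) by (simp add: less_eq_vec_def)
  show "\<exists>k\<in>UNIV. u $ k < v $ k"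
    using assms by (auto simp: less_eq_vec_def vec_eq_iff order.strict_iff_order)
qed simp

text \<open>A minimiser of the coordinate sum over a compact slice of \<open>S\<close> is below every
  element of \<open>S\<close>: otherwise its componentwise minimum with that element would have a
  smaller coordinate sum and still lie in the slice.\<close>
lemma closed_min_closed_has_least:
  fixes S :: "(real ^ 'n) set"
  assumes "closed S" "S \<noteq> {}" "\<forall>v\<in>S. a \<le> v" "\<forall>u\<in>S. \<forall>w\<in>S. vec_min u w \<in> S"
  obtains p where "p \<in> S" "\<forall>v\<in>S. p \<le> v"
proof -
  obtain s where s: "s \<in> S" using assms(2) by blast
  define K where "K = S \<inter> {a..s}"
  have "compact K" unfolding K_def interval_cbox_cart
    using assms(1) by (intro closed_Int_compact compact_cbox)
  moreover have "K \<noteq> {}" using s assms(3) by (auto simp: K_def)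
  moreover have "continuous_on K (\<lambda>v. \<Sum>k\<in>UNIV. v $ k)"
    by (intro continuous_intros)
  ultimately obtain p where p: "p \<in> K" and p_min: "\<forall>m\<in>K. (\<Sum>k\<in>UNIV. p $ k) \<le> (\<Sum>k\<in>UNIV. m $ k)"
    using continuous_attains_inf by blast
  have "p \<le> v" if v: "v \<in> S" for v
  proof -
    have "vec_min p v \<in> K"
      using p v assms(3,4) order.trans[OF vec_min_le_left]
      by (auto simp: K_def intro: vec_min_greatest)
    then have "vec_min p v = p"
      using p_min sum_components_less[OF vec_min_le_left] by (meson not_le)
    then show ?thesis by (simp add: vec_min_eq_left_iff)
  qed
  with p show thesis by (intro that) (auto simp: K_def)
qed

lemma pareto_point_iff_least:
  assumes "p \<in> S" "\<forall>v\<in>S. p \<le> v"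
  shows "pareto_point S q \<longleftrightarrow> q = p"
  using assms unfolding pareto_point_def
  by (metis less_eq_vec_def order_antisym)

lemma least_imp_extreme_point:
  fixes p :: "real ^ 'n"
  assumes "p \<in> S" "\<forall>v\<in>S. p \<le> v"
  shows "p extreme_point_of S"
  unfolding extreme_point_of_def
proof (intro conjI ballI notI)
  fix a b assume a: "a \<in> S" and b: "b \<in> S" and p: "p \<in> open_segment a b"
  then obtain u where "a \<noteq> b" "0 < u" "u < 1" and p_eq: "p = (1 - u) *\<^sub>R a + u *\<^sub>R b"
    by (auto simp: in_segment)
  moreover have "a $ k = b $ k" for k
  proof -
    have le: "p $ k \<le> a $ k" "p $ k \<le> b $ k"
      using assms(2) a b by (auto simp: less_eq_vec_def)
    have "p $ k = (1 - u) * a $ k + u * b $ k" using p_eq by simp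
    then have "(1 - u) * (a $ k - p $ k) + u * (b $ k - p $ k) = 0"
      by (simp add: algebra_simps)
    with le have "(1 - u) * (a $ k - p $ k) = 0" "u * (b $ k - p $ k) = 0"
      using \<open>0 < u\<close> \<open>u < 1\<close> by (simp_all add: add_nonneg_eq_0_iff)
    then show ?thesis using \<open>0 < u\<close> \<open>u < 1\<close> by simp
  qed
  ultimately show False by (simp add: vec_eq_iff)
qed (use assms in simp)

lemma welfare_combine:
  assumes "finite N" "i \<in> N"
  shows "welfare N (combine i beta v bo) y = bid_of_vec beta v (y i) + welfare (N - {i}) bo y"
  using assms by (simp add: welfare_def combine_def sum.remove cong: sum.cong_simp)

lemma finite_allocations:
  assumes "finite N" "\<And>j. j \<in> N \<Longrightarrow> finite (I j)"
  shows "finite {x. allocation N I x}"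
proof (rule finite_subset)
  show "{x. allocation N I x} \<subseteq>
      {x. \<forall>j. (j \<in> N \<longrightarrow> x j \<in> insert {} (\<Union>j\<in>N. I j)) \<and> (j \<notin> N \<longrightarrow> x j = {})}"
    by (auto simp: allocation_def)
  show "finite {x. \<forall>j. (j \<in> N \<longrightarrow> x j \<in> insert {} (\<Union>j\<in>N. I j)) \<and> (j \<notin> N \<longrightarrow> x j = {})}"
    using assms by (intro finite_set_of_finite_funs) auto
qed

lemma opt_allocs_nonempty:
  assumes "finite N" "\<And>j. j \<in> N \<Longrightarrow> finite (I j)"
  shows "opt_allocs N I b \<noteq> {}"
proof -
  let ?A = "{x. allocation N I x}"
  have "allocation N I (\<lambda>j. {})" by (simp add: allocation_def)
  then have "Max (welfare N b ` ?A) \<in> welfare N b ` ?A"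
    using finite_allocations[OF assms] by (intro Max_in) auto
  then obtain x where "x \<in> ?A" "welfare N b x = Max (welfare N b ` ?A)" by auto
  then show ?thesis
    using finite_allocations[OF assms] by (auto simp: opt_allocs_def)
qed

lemma linear_bid_of_vec: "linear (\<lambda>v. bid_of_vec beta v T)"
  by (auto simp: bid_of_vec_def intro!: linearI)

lemma bid_of_vec_vec_min:
  "bid_of_vec beta (vec_min u w) T = min (bid_of_vec beta u T) (bid_of_vec beta w T)"
  by (simp add: bid_of_vec_def vec_min_def)

definition optimality_region :: "'n set \<Rightarrow> ('n \<Rightarrow> 'g set set) \<Rightarrow> 'n \<Rightarrow> ('r \<Rightarrow> 'g set)
    \<Rightarrow> ('n \<Rightarrow> 'g set \<Rightarrow> real) \<Rightarrow> ('n \<Rightarrow> 'g set) \<Rightarrow> (real ^ 'r) set" where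
  "optimality_region N I i beta bo x = {v. x \<in> opt_allocs N I (combine i beta v bo)}"

lemma optimality_region_eq_INT:
  assumes "finite N" "i \<in> N" "allocation N I x"
  shows "optimality_region N I i beta bo x = (\<Inter>y\<in>{y. allocation N I y}.
    {v. bid_of_vec beta v (y i) - bid_of_vec beta v (x i) \<le> welfare (N - {i}) bo x - welfare (N - {i}) bo y})"
  using assms by (force simp: optimality_region_def opt_allocs_def welfare_combine)

lemma optimality_region_not_allocation:
  "\<not> allocation N I x \<Longrightarrow> optimality_region N I i beta bo x = {}"
  by (simp add: optimality_region_def opt_allocs_def)

lemma convex_optimality_region:
  assumes "finite N" "i \<in> N"
  shows "convex (optimality_region N I i beta bo x)"
proof (cases "allocation N I x")
  case True
  have "convex ((\<lambda>v. bid_of_vec beta v (y i) - bid_of_vec beta v (x i)) -` {..c})" for y c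
    by (intro convex_linear_vimage linear_compose_sub linear_bid_of_vec convex_real_interval)
  then show ?thesis
    using assms True by (auto simp: optimality_region_eq_INT vimage_def intro!: convex_INT)
qed (simp add: optimality_region_not_allocation)

lemma closed_optimality_region:
  assumes "finite N" "i \<in> N"
  shows "closed (optimality_region N I i beta bo x)"
proof (cases "allocation N I x")
  case True
  have "continuous_on UNIV (\<lambda>v. bid_of_vec beta v T)" for T
    using linear_bid_of_vec by (intro linear_continuous_on) (simp add: linear_conv_bounded_linear)
  then show ?thesis
    using assms True
    by (auto simp: optimality_region_eq_INT intro!: closed_INT closed_Collect_le continuous_intros)
qed (simp add: optimality_region_not_allocation)

lemma vec_min_mem_optimality_region:
  assumes "finite N" "i \<in> N"
    and "u \<in> optimality_region N I i beta bo x" "w \<in> optimality_region N I i beta bo x"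
  shows "vec_min u w \<in> optimality_region N I i beta bo x"
proof (cases "allocation N I x")
  case True
  with assms show ?thesis
    by (auto simp: optimality_region_eq_INT bid_of_vec_vec_min min_def)
qed (use assms in \<open>simp add: optimality_region_not_allocation\<close>)

lemma closed_action_space: "closed action_space"
  unfolding action_space_def by (intro closed_Collect_all closed_Collect_le continuous_intros)

lemma convex_action_space: "convex action_space"
  unfolding action_space_def convex_def by simp

lemma vec_min_mem_action_space:
  "u \<in> action_space \<Longrightarrow> w \<in> action_space \<Longrightarrow> vec_min u w \<in> action_space"
  by (simp add: action_space_def vec_min_def)

lemma cell_nonempty:
  assumes "finite N" "\<And>j. j \<in> N \<Longrightarrow> finite (I j)" "is_cell N I i beta B S"
  shows "S \<noteq> {}"
proof
  assume "S = {}"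
  have "opt_allocs N I b \<noteq> {}" for b using assms(1,2) by (rule opt_allocs_nonempty)
  then have "admissible_region N I i beta B {0}"
    by (auto simp: admissible_region_def action_space_def)
  with assms(3) \<open>S = {}\<close> show False unfolding is_cell_def by blast
qed

lemma cell_eq_optimality_regions:
  assumes "finite N" "i \<in> N" "is_cell N I i beta B S"
  obtains X where "S = action_space \<inter> (\<Inter>bo\<in>B. optimality_region N I i beta bo (X bo))"
proof -
  have adm: "admissible_region N I i beta B S" using assms(3) by (simp add: is_cell_def)
  then obtain X where X: "\<forall>bo\<in>B. \<forall>v\<in>S. X bo \<in> opt_allocs N I (combine i beta v bo)"
    unfolding admissible_region_def by metis
  define C where "C = action_space \<inter> (\<Inter>bo\<in>B. optimality_region N I i beta bo (X bo))"
  have "S \<subseteq> C" using adm X by (auto simp: C_def admissible_region_def optimality_region_def)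
  moreover have "convex C" unfolding C_def
    using assms(1,2) by (intro convex_Int convex_action_space convex_INT convex_optimality_region)
  then have "admissible_region N I i beta B C"
    by (auto simp: admissible_region_def C_def optimality_region_def convex_connected)
  ultimately have "S = C" using assms(3) unfolding is_cell_def by blast
  then show thesis by (simp add: C_def that)
qed

theorem lemma3:
  fixes M :: "'g set" and N :: "'n set" and i :: 'n
    and I :: "'n \<Rightarrow> 'g set set" and beta :: "'r::finite \<Rightarrow> 'g set"
    and Pr :: "'w measure" and Mv :: "'n \<Rightarrow> 'v measure"
    and V :: "'n \<Rightarrow> 'w \<Rightarrow> 'v" and s :: "'n \<Rightarrow> 'v \<Rightarrow> 'g set \<Rightarrow> real"
    and S :: "(real ^ 'r) set"
  assumes "finite M" and "finite N" and "i \<in> N"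
    and "\<And>j. j \<in> N \<Longrightarrow> finite (I j)"
    and "\<And>j T. j \<in> N \<Longrightarrow> T \<in> I j \<Longrightarrow> T \<subseteq> M \<and> T \<noteq> {}"
    and "inj beta" and "range beta = I i"
    and "prob_space Pr"
    and "prob_space.indep_vars Pr Mv V N"
    and "\<And>j. j \<in> N - {i} \<Longrightarrow> s j \<in> measurable (Mv j) (count_space UNIV)"
    and "\<And>j v. j \<in> N - {i} \<Longrightarrow> valid_bid (I j) (s j v)"
    and "\<And>j. j \<in> N - {i} \<Longrightarrow> finite (range (s j))"
    and "is_cell N I i beta (positive_profiles Pr N i s V) S"
  shows "(\<exists>!p. pareto_point S p) \<and> (\<forall>p. pareto_point S p \<longrightarrow> p extreme_point_of S)"
proof -
  let ?B = "positive_profiles Pr N i s V"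
  obtain X where S_eq: "S = action_space \<inter> (\<Inter>bo\<in>?B. optimality_region N I i beta bo (X bo))"
    using assms(2,3,13) by (rule cell_eq_optimality_regions)
  have "closed S" unfolding S_eq using assms(2,3)
    by (auto intro!: closed_Int closed_action_space closed_INT closed_optimality_region)
  moreover have "S \<noteq> {}" using assms(2,4,13) by (rule cell_nonempty)
  moreover have "\<forall>v\<in>S. 0 \<le> v" by (simp add: S_eq action_space_def less_eq_vec_def)
  moreover have "\<forall>u\<in>S. \<forall>w\<in>S. vec_min u w \<in> S"
    using assms(2,3)
    by (auto simp: S_eq intro: vec_min_mem_action_space vec_min_mem_optimality_region)
  ultimately obtain p where "p \<in> S" "\<forall>v\<in>S. p \<le> v" by (rule closed_min_closed_has_least)
  then show ?thesis by (simp add: pareto_point_iff_least least_imp_extreme_point)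
qed

end
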